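(* Let $(A;R)\in\mathcal C$ and work in $PG(A;R)$. Let $A_1,A_2,C$ be closed sets with $d(A_1\cup A_2)=d(A_1)+d(A_2)-d(A_1\cap A_2)$. Then $$d((A_1\cap C)\cup(A_2\cap C))=d(A_1\cap C)+d(A_2\cap C)-d(A_1\cap A_2\cap C).$$
   Context: A set system is a pair $(A;R)$ where $R$ is a set of finite non-empty subsets of $A$; for $X\subseteq A$, $R[X]=\{r\in R:r\subseteq X\}$ and $\delta(X)=|X|-|R[X]|$. $\mathcal C$ is the class of finite set systems with $\delta(X)\ge0$ for all $X\subseteq A$. $d(X)=\min\{\delta(Y):X\subseteq Y\subseteq A\}$, $\mathrm{cl}(X)=\{y:d(X\cup\{y\})=d(X)\}$, and $PG(A;R)$ is the matroid $(A,\mathrm{cl})$ with rank function $d$; closed sets are $F$ with $\mathrm{cl}(F)=F$. *)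

theory Defs
  imports Main
begin

definition set_system :: "'a set \<Rightarrow> 'a set set \<Rightarrow> bool" where
  "set_system A R \<longleftrightarrow> (\<forall>r\<in>R. finite r \<and> r \<noteq> {} \<and> r \<subseteq> A)"

definition Rof :: "'a set set \<Rightarrow> 'a set \<Rightarrow> 'a set set" where
  "Rof R X = {r \<in> R. r \<subseteq> X}"

definition delta :: "'a set set \<Rightarrow> 'a set \<Rightarrow> int" where
  "delta R X = int (card X) - int (card (Rof R X))"

definition classC :: "'a set \<Rightarrow> 'a set set \<Rightarrow> bool" where
  "classC A R \<longleftrightarrow> set_system A R \<and> finite A \<and> finite R \<and>
     (\<forall>X. X \<subseteq> A \<longrightarrow> delta R X \<ge> 0)"

definition dd :: "'a set \<Rightarrow> 'a set set \<Rightarrow> 'a set \<Rightarrow> int" where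
  "dd A R X = Min {delta R Y | Y. X \<subseteq> Y \<and> Y \<subseteq> A}"

definition cl :: "'a set \<Rightarrow> 'a set set \<Rightarrow> 'a set \<Rightarrow> 'a set" where
  "cl A R X = {y \<in> A. dd A R (X \<union> {y}) = dd A R X}"

definition closed_set :: "'a set \<Rightarrow> 'a set set \<Rightarrow> 'a set \<Rightarrow> bool" where
  "closed_set A R F \<longleftrightarrow> F \<subseteq> A \<and> cl A R F = F"

end

theory Submission
  imports Defs
begin

(* Write delta for the set function |X| - |R[X]| and d for its
   upward minimum, so that d(X) = min { delta(Y) : X <= Y <= A }.
   (1) delta is submodular, and its modularity defect on a pair P, Q is exactly
       the number of relations contained in P u Q but in neither P nor Q.
   (2) Call F delta-minimal if delta(F) <= delta(Y) for every F <= Y <= A;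
       this holds iff d(F) = delta(F).  Submodularity shows that intersections
       of delta-minimal sets are delta-minimal.
   (3) A closed set F is even strictly delta-minimal (delta(F) < delta(Y) for
       F < Y <= A), and strict delta-minimality is preserved by intersections;
       hence d = delta on all intersections of closed sets.
   (4) For the main theorem, the modularity hypothesis on A1, A2 forces
       A1 u A2 to be delta-minimal and no relation to cross A1, A2.  Then
       (A1 n C) u (A2 n C) = C n (A1 u A2) is delta-minimal, no relation
       crosses A1 n C, A2 n C, and modularity of delta there gives the claim. *)

section \<open>Modularity defect of delta\<close>

lemma finite_Rof: "finite R \<Longrightarrow> finite (Rof R P)"
  unfolding Rof_def by auto

lemma Rof_Int: "Rof R P \<inter> Rof R Q = Rof R (P \<inter> Q)"
  unfolding Rof_def by auto

lemma Rof_Un_subset: "Rof R P \<union> Rof R Q \<subseteq> Rof R (P \<union> Q)"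
  unfolding Rof_def by auto

lemma delta_modularity_defect:
  assumes "finite R" "finite P" "finite Q"
  shows "delta R P + delta R Q - delta R (P \<union> Q) - delta R (P \<inter> Q)
         = int (card (Rof R (P \<union> Q) - (Rof R P \<union> Rof R Q)))"
proof -
  have points: "card P + card Q = card (P \<union> Q) + card (P \<inter> Q)"
    using card_Un_Int[OF assms(2,3)] .
  have rels: "card (Rof R P) + card (Rof R Q) = card (Rof R P \<union> Rof R Q) + card (Rof R (P \<inter> Q))"
    using card_Un_Int[OF finite_Rof[OF assms(1)] finite_Rof[OF assms(1)]] Rof_Int by metis
  have crossing: "card (Rof R (P \<union> Q) - (Rof R P \<union> Rof R Q))
                  = card (Rof R (P \<union> Q)) - card (Rof R P \<union> Rof R Q)"
    using card_Diff_subset[OF _ Rof_Un_subset] finite_Rof[OF assms(1)] by blast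
  have "card (Rof R P \<union> Rof R Q) \<le> card (Rof R (P \<union> Q))"
    by (rule card_mono[OF finite_Rof[OF assms(1)] Rof_Un_subset])
  then show ?thesis
    using points rels crossing unfolding delta_def by linarith
qed

lemma delta_submodular:
  assumes "finite R" "finite P" "finite Q"
  shows "delta R (P \<union> Q) + delta R (P \<inter> Q) \<le> delta R P + delta R Q"
  using delta_modularity_defect[OF assms] by linarith

lemma delta_modular_iff:
  assumes "finite R" "finite P" "finite Q"
  shows "delta R (P \<union> Q) + delta R (P \<inter> Q) = delta R P + delta R Q
         \<longleftrightarrow> (\<forall>r\<in>R. r \<subseteq> P \<union> Q \<longrightarrow> r \<subseteq> P \<or> r \<subseteq> Q)"
proof -
  have "delta R (P \<union> Q) + delta R (P \<inter> Q) = delta R P + delta R Q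
        \<longleftrightarrow> card (Rof R (P \<union> Q) - (Rof R P \<union> Rof R Q)) = 0"
    using delta_modularity_defect[OF assms] by linarith
  also have "\<dots> \<longleftrightarrow> Rof R (P \<union> Q) - (Rof R P \<union> Rof R Q) = {}"
    using finite_Rof[OF assms(1)] by simp
  also have "\<dots> \<longleftrightarrow> (\<forall>r\<in>R. r \<subseteq> P \<union> Q \<longrightarrow> r \<subseteq> P \<or> r \<subseteq> Q)"
    unfolding Rof_def by blast
  finally show ?thesis .
qed

lemma dd_candidates:
  assumes "finite A" "X \<subseteq> A"
  shows "finite {delta R Y | Y. X \<subseteq> Y \<and> Y \<subseteq> A}" "{delta R Y | Y. X \<subseteq> Y \<and> Y \<subseteq> A} \<noteq> {}"
proof -
  have "{delta R Y | Y. X \<subseteq> Y \<and> Y \<subseteq> A} \<subseteq> delta R ` Pow A" by auto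
  then show "finite {delta R Y | Y. X \<subseteq> Y \<and> Y \<subseteq> A}" using assms finite_subset by blast
  show "{delta R Y | Y. X \<subseteq> Y \<and> Y \<subseteq> A} \<noteq> {}" using assms by auto
qed

lemma dd_le:
  assumes "finite A" "X \<subseteq> Y" "Y \<subseteq> A"
  shows "dd A R X \<le> delta R Y"
  unfolding dd_def using dd_candidates[of A X R] assms by (intro Min_le) auto

lemma dd_attained:
  assumes "finite A" "X \<subseteq> A"
  obtains Y where "X \<subseteq> Y" "Y \<subseteq> A" "dd A R X = delta R Y"
proof -
  have "dd A R X \<in> {delta R Y | Y. X \<subseteq> Y \<and> Y \<subseteq> A}"
    unfolding dd_def using dd_candidates[OF assms, of R] by (rule Min_in)
  then show ?thesis using that by auto
qed

lemma dd_mono: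
  assumes "finite A" "X \<subseteq> X'" "X' \<subseteq> A"
  shows "dd A R X \<le> dd A R X'"
proof -
  obtain Y where "X' \<subseteq> Y" "Y \<subseteq> A" "dd A R X' = delta R Y"
    using dd_attained assms by blast
  then show ?thesis using dd_le[of A X Y R] assms by auto
qed

section \<open>Delta-minimal sets\<close>

definition delta_minimal :: "'a set \<Rightarrow> 'a set set \<Rightarrow> 'a set \<Rightarrow> bool" where
  "delta_minimal A R F \<longleftrightarrow> F \<subseteq> A \<and> (\<forall>Y. F \<subseteq> Y \<longrightarrow> Y \<subseteq> A \<longrightarrow> delta R F \<le> delta R Y)"

lemma dd_eq_delta_iff:
  assumes "finite A" "F \<subseteq> A"
  shows "dd A R F = delta R F \<longleftrightarrow> delta_minimal A R F"
proof
  assume "dd A R F = delta R F"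
  then show "delta_minimal A R F"
    unfolding delta_minimal_def using dd_le[OF assms(1)] assms(2) by metis
next
  assume min: "delta_minimal A R F"
  obtain Y where Y: "F \<subseteq> Y" "Y \<subseteq> A" "dd A R F = delta R Y"
    using dd_attained[OF assms] by blast
  have "delta R F \<le> delta R Y" using min Y unfolding delta_minimal_def by blast
  moreover have "dd A R F \<le> delta R F" using dd_le[OF assms(1) _ assms(2)] by simp
  ultimately show "dd A R F = delta R F" using Y by simp
qed

lemma delta_minimal_dd:
  assumes "finite A" "delta_minimal A R F"
  shows "dd A R F = delta R F"
  using dd_eq_delta_iff[OF assms(1)] assms(2) unfolding delta_minimal_def by blast

text \<open>Cutting any S \<subseteq> A down to a delta-minimal F does not increase delta:
  by submodularity, delta(S \<inter> F) \<le> delta S + delta F - delta(S \<union> F) \<le> delta S.\<close>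
lemma delta_minimal_cut:
  assumes "finite A" "finite R" "delta_minimal A R F" "S \<subseteq> A"
  shows "delta R (S \<inter> F) + (delta R (S \<union> F) - delta R F) \<le> delta R S"
    and "delta R F \<le> delta R (S \<union> F)"
proof -
  have FA: "F \<subseteq> A" using assms(3) unfolding delta_minimal_def by blast
  then show "delta R F \<le> delta R (S \<union> F)"
    using assms(3,4) unfolding delta_minimal_def by blast
  have "finite S" "finite F" using finite_subset[OF assms(4) assms(1)] finite_subset[OF FA assms(1)] by auto
  then show "delta R (S \<inter> F) + (delta R (S \<union> F) - delta R F) \<le> delta R S"
    using delta_submodular[OF assms(2), of S F] by linarith
qed

lemma delta_minimal_Int:
  assumes "finite A" "finite R" "delta_minimal A R F" "delta_minimal A R G"
  shows "delta_minimal A R (F \<inter> G)"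
  unfolding delta_minimal_def
proof (intro conjI allI impI)
  show "F \<inter> G \<subseteq> A" using assms(3) unfolding delta_minimal_def by blast
  fix Y assume Y: "F \<inter> G \<subseteq> Y" "Y \<subseteq> A"
  have "delta R (Y \<inter> F) \<le> delta R Y"
    using delta_minimal_cut[OF assms(1-3) Y(2)] by linarith
  moreover have "delta R (Y \<inter> F \<inter> G) \<le> delta R (Y \<inter> F)"
  proof -
    have "Y \<inter> F \<subseteq> A" using Y(2) by blast
    from delta_minimal_cut[OF assms(1,2,4) this] show ?thesis by linarith
  qed
  moreover have "Y \<inter> F \<inter> G = F \<inter> G" using Y(1) by blast
  ultimately show "delta R (F \<inter> G) \<le> delta R Y" by simp
qed

definition strictly_delta_minimal :: "'a set \<Rightarrow> 'a set set \<Rightarrow> 'a set \<Rightarrow> bool" where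
  "strictly_delta_minimal A R F \<longleftrightarrow> F \<subseteq> A \<and> (\<forall>Y. F \<subset> Y \<longrightarrow> Y \<subseteq> A \<longrightarrow> delta R F < delta R Y)"

lemma strictly_delta_minimal_imp:
  "strictly_delta_minimal A R F \<Longrightarrow> delta_minimal A R F"
  unfolding strictly_delta_minimal_def delta_minimal_def
  by (metis order.order_iff_strict psubsetI)

text \<open>If F is closed, adding any y \<in> A - F strictly raises d, so the set realising
  d(F) must be F itself, and any proper superset Y \<supseteq> F \<union> {y} has
  delta(Y) \<ge> d(F \<union> {y}) > d(F) = delta(F).\<close>
lemma closed_strictly_delta_minimal:
  assumes "finite A" "closed_set A R F"
  shows "strictly_delta_minimal A R F"
proof -
  have FA: "F \<subseteq> A" and clF: "cl A R F = F" using assms(2) unfolding closed_set_def by auto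
  have raise: "dd A R F < dd A R (F \<union> {y})" if "y \<in> A" "y \<notin> F" for y
  proof -
    have "F \<union> {y} \<subseteq> A" using FA that(1) by blast
    from dd_mono[OF assms(1) _ this] have "dd A R F \<le> dd A R (F \<union> {y})" by blast
    moreover have "dd A R (F \<union> {y}) \<noteq> dd A R F" using that clF unfolding cl_def by blast
    ultimately show ?thesis by linarith
  qed
  have above: "dd A R F < delta R Y" if psub: "F \<subset> Y" and YA: "Y \<subseteq> A" for Y
  proof -
    obtain y where y: "y \<in> Y" "y \<notin> F" using psub by blast
    have "F \<union> {y} \<subseteq> Y" using psub y(1) by blast
    from dd_le[OF assms(1) this YA] have "dd A R (F \<union> {y}) \<le> delta R Y" .
    moreover have "y \<in> A" using y(1) YA by blast
    ultimately show ?thesis using raise[of y] y(2) by linarith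
  qed
  obtain Y0 where Y0: "F \<subseteq> Y0" "Y0 \<subseteq> A" "dd A R F = delta R Y0"
    using dd_attained[OF assms(1) FA] by blast
  have "Y0 = F"
  proof (rule ccontr)
    assume "Y0 \<noteq> F"
    then have "F \<subset> Y0" using Y0(1) by blast
    then have "dd A R F < delta R Y0" using above Y0(2) by blast
    then show False using Y0(3) by simp
  qed
  then show ?thesis
    unfolding strictly_delta_minimal_def using FA above Y0(3) \<open>Y0 = F\<close> by auto
qed

text \<open>For Y \<supset> F \<inter> G, either
  Y \<not>\<subseteq> F and strictness of F applies to Y \<union> F, or Y \<subseteq> F, Y \<inter> F = Y \<supset> F \<inter> G,
  and strictness of G applies to Y \<union> G.\<close>
lemma strictly_delta_minimal_Int:
  assumes "finite A" "finite R" "strictly_delta_minimal A R F" "strictly_delta_minimal A R G"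
  shows "strictly_delta_minimal A R (F \<inter> G)"
proof -
  have FA: "F \<subseteq> A" and strictF: "\<And>Y. F \<subset> Y \<Longrightarrow> Y \<subseteq> A \<Longrightarrow> delta R F < delta R Y"
    using assms(3) unfolding strictly_delta_minimal_def by auto
  have GA: "G \<subseteq> A" and strictG: "\<And>Y. G \<subset> Y \<Longrightarrow> Y \<subseteq> A \<Longrightarrow> delta R G < delta R Y"
    using assms(4) unfolding strictly_delta_minimal_def by auto
  have minF: "delta_minimal A R F" and minG: "delta_minimal A R G"
    using assms(3,4) by (auto intro: strictly_delta_minimal_imp)
  have "delta R (F \<inter> G) < delta R Y" if Y: "F \<inter> G \<subset> Y" "Y \<subseteq> A" for Y
  proof -
    note cutF = delta_minimal_cut[OF assms(1,2) minF Y(2)]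
    have YF: "Y \<inter> F \<subseteq> A" using Y by blast
    have "Y \<inter> F \<inter> G = F \<inter> G" using Y by blast
    note cutG = delta_minimal_cut[OF assms(1,2) minG YF, unfolded this]
    show ?thesis
    proof (cases "Y \<subseteq> F")
      case True
      then have "G \<subset> Y \<inter> F \<union> G" using Y by blast
      then have "delta R G < delta R (Y \<inter> F \<union> G)" using strictG YF GA by blast
      then show ?thesis using cutF cutG by linarith
    next
      case False
      then have "F \<subset> Y \<union> F" by blast
      then have "delta R F < delta R (Y \<union> F)" using strictF Y(2) FA by blast
      then show ?thesis using cutF cutG by linarith
    qed
  qed
  then show ?thesis unfolding strictly_delta_minimal_def using FA by blast
qed

text \<open>If F, G and F \<inter> G are delta-minimal and d is modular on F, G, then
  F \<union> G is delta-minimal and no relation crosses F, G: indeed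
  d(F \<union> G) \<le> delta(F \<union> G) \<le> delta F + delta G - delta(F \<inter> G) = d(F \<union> G).\<close>
lemma dd_modular_pair:
  assumes "finite A" "finite R"
    and minF: "delta_minimal A R F" and minG: "delta_minimal A R G"
    and minFG: "delta_minimal A R (F \<inter> G)"
    and modular: "dd A R (F \<union> G) = dd A R F + dd A R G - dd A R (F \<inter> G)"
  shows "delta_minimal A R (F \<union> G)"
    and "\<forall>r\<in>R. r \<subseteq> F \<union> G \<longrightarrow> r \<subseteq> F \<or> r \<subseteq> G"
proof -
  have FA: "F \<subseteq> A" and GA: "G \<subseteq> A"
    using minF minG unfolding delta_minimal_def by auto
  have fin: "finite F" "finite G" using FA GA assms(1) finite_subset by auto
  have "dd A R F = delta R F" "dd A R G = delta R G" "dd A R (F \<inter> G) = delta R (F \<inter> G)"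
    using delta_minimal_dd[OF assms(1)] minF minG minFG by blast+
  then have "dd A R (F \<union> G) = delta R F + delta R G - delta R (F \<inter> G)"
    using modular by simp
  moreover have "dd A R (F \<union> G) \<le> delta R (F \<union> G)"
    using dd_le[OF assms(1)] FA GA by simp
  moreover note delta_submodular[OF assms(2) fin]
  ultimately have "dd A R (F \<union> G) = delta R (F \<union> G)"
    and "delta R (F \<union> G) + delta R (F \<inter> G) = delta R F + delta R G"
    by linarith+
  then show "delta_minimal A R (F \<union> G)"
    and "\<forall>r\<in>R. r \<subseteq> F \<union> G \<longrightarrow> r \<subseteq> F \<or> r \<subseteq> G"
    using dd_eq_delta_iff[OF assms(1)] delta_modular_iff[OF assms(2) fin] FA GA by auto
qed

text \<open>Cutting a modular pair F, G down to a delta-minimal C keeps d modular: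
  (F \<inter> C) \<union> (G \<inter> C) = C \<inter> (F \<union> G) is delta-minimal, and no relation crosses
  F \<inter> C, G \<inter> C since none crosses F, G.\<close>
lemma dd_modular_restrict:
  assumes fA: "finite A" and fR: "finite R"
    and minU: "delta_minimal A R (F \<union> G)"
    and no_crossing: "\<forall>r\<in>R. r \<subseteq> F \<union> G \<longrightarrow> r \<subseteq> F \<or> r \<subseteq> G"
    and minC: "delta_minimal A R C"
    and minX: "delta_minimal A R (F \<inter> C)" and minY: "delta_minimal A R (G \<inter> C)"
    and minXY: "delta_minimal A R (F \<inter> G \<inter> C)"
  shows "dd A R ((F \<inter> C) \<union> (G \<inter> C))
           = dd A R (F \<inter> C) + dd A R (G \<inter> C) - dd A R (F \<inter> G \<inter> C)"
proof -
  define X Y where "X = F \<inter> C" and "Y = G \<inter> C"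
  have XY: "X \<union> Y = C \<inter> (F \<union> G)" "X \<inter> Y = F \<inter> G \<inter> C"
    unfolding X_def Y_def by blast+
  have fin: "finite X" "finite Y"
    using minX minY fA finite_subset unfolding X_def Y_def delta_minimal_def by auto
  have "delta_minimal A R (X \<union> Y)"
    unfolding XY(1) by (rule delta_minimal_Int[OF fA fR minC minU])
  then have "dd A R (X \<union> Y) = delta R (X \<union> Y)"
    by (rule delta_minimal_dd[OF fA])
  moreover have "dd A R X = delta R X" "dd A R Y = delta R Y"
      "dd A R (F \<inter> G \<inter> C) = delta R (F \<inter> G \<inter> C)"
    unfolding X_def Y_def using delta_minimal_dd[OF fA] minX minY minXY by blast+
  moreover have "delta R (X \<union> Y) + delta R (X \<inter> Y) = delta R X + delta R Y"
    by (rule iffD2[OF delta_modular_iff[OF fR fin]])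
      (use no_crossing in \<open>auto simp add: X_def Y_def\<close>)
  ultimately show ?thesis
    unfolding XY(2) X_def[symmetric] Y_def[symmetric] by linarith
qed

theorem lemma6p3:
  fixes A :: "'a set" and R :: "'a set set" and A1 A2 C :: "'a set"
  assumes "classC A R"
    and "closed_set A R A1" and "closed_set A R A2" and "closed_set A R C"
    and "dd A R (A1 \<union> A2) = dd A R A1 + dd A R A2 - dd A R (A1 \<inter> A2)"
  shows "dd A R ((A1 \<inter> C) \<union> (A2 \<inter> C))
           = dd A R (A1 \<inter> C) + dd A R (A2 \<inter> C) - dd A R (A1 \<inter> A2 \<inter> C)"
proof -
  have fA: "finite A" and fR: "finite R" using assms(1) unfolding classC_def by auto
  have s1: "strictly_delta_minimal A R A1" and s2: "strictly_delta_minimal A R A2"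
    and sC: "strictly_delta_minimal A R C"
    using closed_strictly_delta_minimal[OF fA] assms(2-4) by auto
  note sInt = strictly_delta_minimal_Int[OF fA fR]
  note min = strictly_delta_minimal_imp
  have "delta_minimal A R (A1 \<union> A2)"
    and "\<forall>r\<in>R. r \<subseteq> A1 \<union> A2 \<longrightarrow> r \<subseteq> A1 \<or> r \<subseteq> A2"
    using dd_modular_pair[OF fA fR min[OF s1] min[OF s2] min[OF sInt[OF s1 s2]] assms(5)] .
  from dd_modular_restrict[OF fA fR this min[OF sC]
      min[OF sInt[OF s1 sC]] min[OF sInt[OF s2 sC]] min[OF sInt[OF sInt[OF s1 s2] sC]]]
  show ?thesis .
qed

end
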